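(* Let $m\ge2$ be even and $V$ a finite-dimensional $\mathbb{K}$-vector space with ordered basis. Then there is a filtration $$\{0\}=\mathrm{HPf}^{(m,1)}(V)\subseteq\mathrm{HPf}^{(m,2)}(V)\subseteq\dots\subseteq\mathrm{HPf}^{(m,l)}(V)\subseteq\mathrm{HPf}^{(m,l+1)}(V)\subseteq\dots\subseteq\textstyle\bigwedge^mV$$ which is exhaustive: $\mathrm{HPf}^{(m,L)}(V)=\bigwedge^mV$ for all sufficiently large $L$.
   Context: Let the basis be $(e_i)_{i\in B}$, $B$ totally ordered. For $x\in\bigwedge^mV$ write $x=\sum_Ix_Ie_I$, $e_I=e_{i_1}\wedge\dots\wedge e_{i_m}$ for $I=\{i_1<\dots<i_m\}$. For $A\subseteq B$ with $|A|=mk$, $\mathrm{hpf}^{(m,k)}_A(x)=\sum\mathrm{sgn}(I_1,\dots,I_k)x_{I_1}\cdots x_{I_k}$, summed over unordered partitions of $A$ into $m$-sets $I_1,\dots,I_k$, with $\mathrm{sgn}$ the sign of the permutation of $A$ listing $I_1,\dots,I_k$ successively, each increasingly. $\mathrm{HPf}^{(m,k)}(V)$ is the set of $x\in\bigwedge^mV$ with $\mathrm{hpf}^{(m,k)}_A(x)=0$ for all $A\subseteq B$, $|A|=mk$. *)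

theory Defs
  imports Main
begin

text \<open>Coordinates: the basis of V is indexed by a finite linearly ordered set B.
  An element x of the m-th exterior power is given by its coefficients x I on the
  basis vectors e_I, I an m-subset of B (x I = 0 for all other sets I).\<close>

definition wedge_space :: "nat \<Rightarrow> 'b::linorder set \<Rightarrow> ('b set \<Rightarrow> 'k::field) set" where
  "wedge_space m B = {x. \<forall>I. x I \<noteq> 0 \<longrightarrow> I \<subseteq> B \<and> card I = m}"

definition m_partitions :: "nat \<Rightarrow> 'b set \<Rightarrow> 'b set set set" where
  "m_partitions m A = {P. (\<forall>I\<in>P. I \<subseteq> A \<and> card I = m) \<and> \<Union>P = A \<and>
      (\<forall>I\<in>P. \<forall>J\<in>P. I \<noteq> J \<longrightarrow> I \<inter> J = {})}"

text \<open>Sign of the permutation of A given by listing the elements in the order of the word xs: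
  (-1) to the number of inversions.\<close>
definition inversions :: "'b::linorder list \<Rightarrow> nat" where
  "inversions xs = card {(i, j). i < j \<and> j < length xs \<and> xs ! j < xs ! i}"

definition word_sign :: "'b::linorder list \<Rightarrow> 'k::field" where
  "word_sign xs = (-1) ^ inversions xs"

text \<open>Blocks listed in a fixed order (by their minimal elements), each block increasingly.
  For even m the sign does not depend on the order of the blocks.\<close>
definition partition_word :: "'b::linorder set set \<Rightarrow> 'b list" where
  "partition_word P = concat (map sorted_list_of_set (sorted_key_list_of_set Min P))"

definition hpf :: "nat \<Rightarrow> nat \<Rightarrow> 'b::linorder set \<Rightarrow> ('b set \<Rightarrow> 'k::field) \<Rightarrow> 'k" where
  "hpf m k A x = (\<Sum>P\<in>m_partitions m A. word_sign (partition_word P) * (\<Prod>I\<in>P. x I))"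

definition HPf :: "nat \<Rightarrow> nat \<Rightarrow> 'b::linorder set \<Rightarrow> ('b set \<Rightarrow> 'k::field) set" where
  "HPf m k B = {x \<in> wedge_space m B. \<forall>A. A \<subseteq> B \<and> card A = m * k \<longrightarrow> hpf m k A x = 0}"

end

theory Submission
  imports Defs
begin

text \<open>Grouping the partitions of A by the block I that contains Min A gives a Laplace-type
  expansion: hpf of A is the signed sum of x I times hpf of A - I, the sign counting the pairs
  of I \<times> (A - I) in the wrong order. So if all hpf of order l vanish, so do those of order
  l + 1. An m-set has the single partition {A}, whence hpf of order 1 is x A itself and
  HPf of order 1 is zero; and once m L exceeds card B there is nothing left to test.\<close>

lemma inversions_append:
  "inversions (xs @ ys) = inversions xs + inversions ys +
     card {(i, j). i < length xs \<and> j < length ys \<and> ys ! j < xs ! i}"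
proof -
  let ?n = "length xs"
  define inv where "inv zs = {(i, j). i < j \<and> j < length zs \<and> zs ! j < zs ! i}" for zs :: "'a list"
  define cross where "cross = {(i, j). i < ?n \<and> j < length ys \<and> ys ! j < xs ! i}"
  let ?shift = "\<lambda>(i, j). (i + ?n, j + ?n)" and ?shift2 = "\<lambda>(i, j). (i, j + ?n)"
  have split: "inv (xs @ ys) = inv xs \<union> ?shift ` inv ys \<union> ?shift2 ` cross"
  proof (intro equalityI subsetI)
    fix p assume "p \<in> inv (xs @ ys)"
    then obtain i j where p: "p = (i, j)" "i < j" "j < ?n + length ys" "(xs @ ys) ! j < (xs @ ys) ! i"
      by (auto simp: inv_def)
    consider "j < ?n" | "?n \<le> i" | "i < ?n" "?n \<le> j" by linarith
    then show "p \<in> inv xs \<union> ?shift ` inv ys \<union> ?shift2 ` cross"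
    proof cases
      case 1
      then show ?thesis using p by (auto simp: inv_def nth_append)
    next
      case 2
      then have "(i - ?n, j - ?n) \<in> inv ys" using p by (auto simp: inv_def nth_append)
      then show ?thesis using p 2 by (auto intro!: image_eqI[of _ _ "(i - ?n, j - ?n)"])
    next
      case 3
      then have "(i, j - ?n) \<in> cross" using p by (auto simp: cross_def nth_append)
      then show ?thesis using p 3 by (auto intro!: image_eqI[of _ _ "(i, j - ?n)"])
    qed
  next
    fix p assume "p \<in> inv xs \<union> ?shift ` inv ys \<union> ?shift2 ` cross"
    then show "p \<in> inv (xs @ ys)"
      by (elim UnE imageE) (auto simp: inv_def cross_def nth_append)
  qed
  have finite_inv: "finite (inv zs)" for zs
    by (rule finite_subset[of _ "{..<length zs} \<times> {..<length zs}"]) (auto simp: inv_def)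
  have "finite cross"
    by (rule finite_subset[of _ "{..<?n} \<times> {..<length ys}"]) (auto simp: cross_def)
  moreover have "inj_on ?shift A" "inj_on ?shift2 A" for A
    by (auto simp: inj_on_def)
  moreover have "inv xs \<inter> ?shift ` inv ys = {}" "(inv xs \<union> ?shift ` inv ys) \<inter> ?shift2 ` cross = {}"
    by (auto simp: inv_def cross_def)
  ultimately have "card (inv (xs @ ys)) = card (inv xs) + card (inv ys) + card cross"
    unfolding split using finite_inv by (simp add: card_Un_disjoint card_image)
  then show ?thesis by (simp add: inversions_def inv_def cross_def)
qed

lemma card_cross_inversions:
  assumes "distinct xs" "distinct ys"
  shows "card {(i, j). i < length xs \<and> j < length ys \<and> ys ! j < xs ! i}
       = card {(u, v) \<in> set xs \<times> set ys. v < u}"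
proof -
  let ?f = "\<lambda>(i, j). (xs ! i, ys ! j)"
  let ?C = "{(i, j). i < length xs \<and> j < length ys \<and> ys ! j < xs ! i}"
  have "{(u, v) \<in> set xs \<times> set ys. v < u} = ?f ` ?C"
    by (auto simp: in_set_conv_nth image_iff)
  moreover have "inj_on ?f ?C"
    using assms by (auto simp: inj_on_def nth_eq_iff_index_eq)
  ultimately show ?thesis by (simp add: card_image)
qed

lemma word_sign_append:
  assumes "distinct xs" "distinct ys"
  shows "(word_sign (xs @ ys) :: 'k::field) =
    word_sign xs * word_sign ys * (-1) ^ card {(u, v) \<in> set xs \<times> set ys. v < u}"
  unfolding word_sign_def inversions_append card_cross_inversions[OF assms] by (simp add: power_add)

lemma word_sign_sorted_list_of_set: "word_sign (sorted_list_of_set I) = 1"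
proof -
  let ?xs = "sorted_list_of_set I"
  have "?xs ! i < ?xs ! j" if "i < j" "j < length ?xs" for i j
    using strict_sorted_list_of_set[of I] that by (simp add: sorted_wrt_iff_nth_less)
  then have "{(i, j). i < j \<and> j < length ?xs \<and> ?xs ! j < ?xs ! i} = {}"
    using less_asym by blast
  then show ?thesis unfolding word_sign_def inversions_def by (metis card.empty power_0)
qed

text \<open>The facts of locale folding_insort_key mention the locale constants
  linorder.insort_key and linorder.sorted_key_list_of_set, which are not syntactically the
  class constants used in partition_word.\<close>

lemma linorder_insort_key_eq: "linorder.insort_key (\<le>) (f :: 'b \<Rightarrow> 'a::linorder) = insort_key f"
proof (intro ext)
  have "class.linorder ((\<le>) :: 'a \<Rightarrow> _) (<)" by unfold_locales
  then show "linorder.insort_key (\<le>) f x xs = insort_key f x xs" for x xs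
    by (induction xs) (simp_all add: linorder.insort_key.simps)
qed

lemma linorder_sorted_key_list_of_set_eq:
  "linorder.sorted_key_list_of_set (\<le>) (f :: 'b \<Rightarrow> 'a::linorder) = sorted_key_list_of_set f"
proof -
  have "class.linorder ((\<le>) :: 'a \<Rightarrow> _) (<)" by unfold_locales
  then show ?thesis
    by (simp add: linorder.sorted_key_list_of_set_def sorted_key_list_of_set_def linorder_insort_key_eq)
qed

lemma folding_insort_key_Min:
  fixes S :: "'a::linorder set set"
  assumes "\<forall>J\<in>S. finite J \<and> J \<noteq> {}" and "pairwise disjnt S"
  shows "folding_insort_key (\<le>) (<) S Min"
proof
  show "inj_on Min S"
  proof (rule inj_onI)
    fix J J' assume J: "J \<in> S" "J' \<in> S" "Min J = Min J'"
    then have "Min J \<in> J \<inter> J'" using assms(1) by (metis IntI Min_in)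
    then show "J = J'" using assms(2) J by (auto simp: pairwise_def disjnt_def)
  qed
qed

lemmas sorted_key_list_of_set_Min =
  folding_insort_key.set_sorted_key_list_of_set[OF folding_insort_key_Min]
  folding_insort_key.distinct_sorted_key_list_of_set[OF folding_insort_key_Min]
  folding_insort_key.sorted_key_list_of_set_insert[OF folding_insort_key_Min]

lemma set_partition_word:
  assumes "finite Q" "\<forall>J\<in>Q. finite J \<and> J \<noteq> {}" "pairwise disjnt Q"
  shows "set (partition_word Q) = \<Union>Q"
  using assms sorted_key_list_of_set_Min(1)[OF assms(2,3), of Q]
  by (auto simp: partition_word_def linorder_sorted_key_list_of_set_eq)

lemma distinct_partition_word:
  assumes "finite Q" "\<forall>J\<in>Q. finite J \<and> J \<noteq> {}" "pairwise disjnt Q"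
  shows "distinct (partition_word Q)"
proof -
  have set_Q: "set (sorted_key_list_of_set Min Q) = Q"
    and distinct_Q: "distinct (sorted_key_list_of_set Min Q)"
    using sorted_key_list_of_set_Min(1,2)[OF assms(2,3), of Q] assms(1)
    by (simp_all add: linorder_sorted_key_list_of_set_eq distinct_map)
  have "inj_on sorted_list_of_set Q"
    using assms(2) by (auto simp: inj_on_def dest: sorted_list_of_set_inject)
  then show ?thesis
    unfolding partition_word_def
  proof (intro distinct_concat)
    fix ys zs assume "ys \<in> set (map sorted_list_of_set (sorted_key_list_of_set Min Q))"
      "zs \<in> set (map sorted_list_of_set (sorted_key_list_of_set Min Q))" "ys \<noteq> zs"
    then obtain J J' where "J \<in> Q" "J' \<in> Q" "J \<noteq> J'"
      and "ys = sorted_list_of_set J" "zs = sorted_list_of_set J'"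
      using set_Q by auto
    then show "set ys \<inter> set zs = {}"
      using assms(2,3) by (auto simp: pairwise_def disjnt_def)
  qed (use set_Q distinct_Q in \<open>auto simp: distinct_map\<close>)
qed

lemma partition_word_insert_Min:
  assumes "finite Q" "\<forall>J\<in>insert I Q. finite J \<and> J \<noteq> {}" "pairwise disjnt (insert I Q)"
    and "I \<notin> Q" and "\<forall>J\<in>Q. Min I \<le> Min J"
  shows "partition_word (insert I Q) = sorted_list_of_set I @ partition_word Q"
proof -
  note skl = sorted_key_list_of_set_Min[OF assms(2,3), unfolded linorder_sorted_key_list_of_set_eq
      linorder_insort_key_eq]
  have "sorted_key_list_of_set Min (insert I Q) = insort_key Min I (sorted_key_list_of_set Min Q)"
    using assms(1,4) by (intro skl(3)) auto
  also have "\<dots> = I # sorted_key_list_of_set Min Q"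
    using assms(1,5) skl(1)[of Q] by (cases "sorted_key_list_of_set Min Q") auto
  finally show ?thesis by (simp add: partition_word_def)
qed

lemma mem_m_partitions_iff:
  "P \<in> m_partitions m A \<longleftrightarrow> (\<forall>I\<in>P. I \<subseteq> A \<and> card I = m) \<and> \<Union>P = A \<and> pairwise disjnt P"
  by (auto simp: m_partitions_def pairwise_def disjnt_def)

lemma finite_m_partitions: "finite A \<Longrightarrow> finite (m_partitions m A)"
  by (rule finite_subset[of _ "Pow (Pow A)"]) (auto simp: m_partitions_def)

lemma finite_m_partition: "P \<in> m_partitions m A \<Longrightarrow> finite A \<Longrightarrow> finite P"
  by (rule finite_subset[of _ "Pow A"]) (auto simp: m_partitions_def)

lemma m_partition_block_unique:
  assumes "P \<in> m_partitions m A" "a \<in> A"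
  obtains I where "{I \<in> P. a \<in> I} = {I}"
proof -
  obtain I where "I \<in> P" "a \<in> I" using assms by (auto simp: m_partitions_def)
  moreover have "J = I" if "J \<in> P" "a \<in> J" for J
    using that \<open>I \<in> P\<close> \<open>a \<in> I\<close> assms(1) unfolding m_partitions_def by blast
  ultimately have "{I \<in> P. a \<in> I} = {I}" by blast
  then show thesis by (rule that)
qed

lemma bij_betw_insert_m_partitions:
  assumes "I \<subseteq> A" "I \<noteq> {}" "card I = m"
  shows "bij_betw (insert I) (m_partitions m (A - I)) {P \<in> m_partitions m A. I \<in> P}"
proof (rule bij_betw_byWitness[where f' = "\<lambda>P. P - {I}"])
  show "\<forall>Q\<in>m_partitions m (A - I). insert I Q - {I} = Q"
    using assms(2) by (auto simp: m_partitions_def)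
  show "\<forall>P\<in>{P \<in> m_partitions m A. I \<in> P}. insert I (P - {I}) = P" by auto
  show "insert I ` m_partitions m (A - I) \<subseteq> {P \<in> m_partitions m A. I \<in> P}"
  proof (rule image_subsetI, rule CollectI, rule conjI)
    fix Q assume "Q \<in> m_partitions m (A - I)"
    then have "(\<forall>J\<in>Q. J \<subseteq> A - I \<and> card J = m) \<and> \<Union>Q = A - I \<and> pairwise disjnt Q"
      by (simp add: mem_m_partitions_iff)
    then show "insert I Q \<in> m_partitions m A"
      using assms unfolding mem_m_partitions_iff pairwise_insert disjnt_def by blast
  qed simp
  show "(\<lambda>P. P - {I}) ` {P \<in> m_partitions m A. I \<in> P} \<subseteq> m_partitions m (A - I)"
    unfolding m_partitions_def by blast
qed

lemma word_sign_insert_m_partition: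
  assumes "finite A" "I \<subseteq> A" "Min A \<in> I" "card I = m" "Q \<in> m_partitions m (A - I)"
  shows "(word_sign (partition_word (insert I Q)) :: 'k::field) =
    (-1) ^ card {(u, v) \<in> I \<times> (A - I). v < u} * word_sign (partition_word Q)"
proof -
  have "finite I" "I \<noteq> {}" using assms(1-3) finite_subset by auto
  have Q: "\<forall>J\<in>Q. J \<subseteq> A - I \<and> card J = m" "\<Union>Q = A - I" "pairwise disjnt Q"
    using assms(5) by (simp_all add: mem_m_partitions_iff)
  have "finite Q" using assms(1,5) by (simp add: finite_m_partition)
  have blocks: "\<forall>J\<in>insert I Q. finite J \<and> J \<noteq> {}"
  proof
    fix J assume "J \<in> insert I Q"
    then have "J \<subseteq> A" "card J = card I" using Q(1) assms(2,4) by auto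
    moreover have "card I \<noteq> 0" using \<open>finite I\<close> \<open>I \<noteq> {}\<close> by simp
    ultimately show "finite J \<and> J \<noteq> {}" using finite_subset[OF _ assms(1)] by force
  qed
  have disjoint: "pairwise disjnt (insert I Q)"
    using Q by (auto simp: pairwise_insert disjnt_def)
  have "I \<notin> Q" using Q(1) \<open>I \<noteq> {}\<close> by blast
  have "Min I = Min A"
    using Min_le[OF \<open>finite I\<close> assms(3)] Min_antimono[OF assms(2) \<open>I \<noteq> {}\<close> assms(1)]
    by (rule antisym)
  have Min_le: "\<forall>J\<in>Q. Min I \<le> Min J"
  proof
    fix J assume "J \<in> Q"
    then have "Min J \<in> J" "J \<subseteq> A" using blocks Q(1) Min_in by auto
    then have "Min J \<in> A" by blast
    then show "Min I \<le> Min J" using \<open>Min I = Min A\<close> assms(1) by simp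
  qed
  have "distinct (partition_word Q)"
    using distinct_partition_word[OF \<open>finite Q\<close> _ Q(3)] blocks by blast
  have "set (partition_word Q) = A - I"
    using set_partition_word[OF \<open>finite Q\<close> _ Q(3)] blocks Q(2) by simp
  have "(word_sign (partition_word (insert I Q)) :: 'k) =
      word_sign (sorted_list_of_set I @ partition_word Q)"
    by (simp only: partition_word_insert_Min[OF \<open>finite Q\<close> blocks disjoint \<open>I \<notin> Q\<close> Min_le])
  also have "\<dots> = (-1) ^ card {(u, v) \<in> I \<times> (A - I). v < u} * word_sign (partition_word Q)"
    using word_sign_append[OF distinct_sorted_list_of_set \<open>distinct (partition_word Q)\<close>, of I]
    by (simp add: word_sign_sorted_list_of_set \<open>finite I\<close> \<open>set (partition_word Q) = A - I\<close>
        mult.commute)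
  finally show ?thesis .
qed

lemma hpf_expand_Min:
  fixes x :: "'b::linorder set \<Rightarrow> 'k::field"
  assumes "finite A" "A \<noteq> {}"
  shows "hpf m (Suc k) A x = (\<Sum>I | I \<subseteq> A \<and> Min A \<in> I \<and> card I = m.
    (-1) ^ card {(u, v) \<in> I \<times> (A - I). v < u} * x I * hpf m k (A - I) x)"
proof -
  define S where "S = {I. I \<subseteq> A \<and> Min A \<in> I \<and> card I = m}"
  define g where "g P = word_sign (partition_word P) * (\<Prod>I\<in>P. x I)" for P
  have "finite S" using assms(1) by (auto simp: S_def)
  have "hpf m (Suc k) A x = (\<Sum>P\<in>m_partitions m A. g P)" by (simp add: hpf_def g_def)
  also have "\<dots> = (\<Sum>P\<in>m_partitions m A. \<Sum>I\<in>{I \<in> S. I \<in> P}. g P)"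
  proof (rule sum.cong[OF refl])
    fix P assume P: "P \<in> m_partitions m A"
    obtain I where "{I \<in> P. Min A \<in> I} = {I}"
      using m_partition_block_unique[OF P Min_in[OF assms]] by blast
    moreover have "{I \<in> S. I \<in> P} = {I \<in> P. Min A \<in> I}"
      using P by (auto simp: S_def m_partitions_def)
    ultimately show "g P = (\<Sum>I\<in>{I \<in> S. I \<in> P}. g P)" by simp
  qed
  also have "\<dots> = (\<Sum>I\<in>S. \<Sum>P\<in>{P \<in> m_partitions m A. I \<in> P}. g P)"
    using \<open>finite S\<close> assms(1) by (intro sum.swap_restrict finite_m_partitions)
  also have "\<dots> = (\<Sum>I\<in>S. \<Sum>Q\<in>m_partitions m (A - I). g (insert I Q))"
    by (intro sum.cong refl sum.reindex_bij_betw[symmetric] bij_betw_insert_m_partitions)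
      (auto simp: S_def)
  also have "\<dots> = (\<Sum>I\<in>S. (-1) ^ card {(u, v) \<in> I \<times> (A - I). v < u} * x I * hpf m k (A - I) x)"
  proof (rule sum.cong[OF refl])
    fix I assume "I \<in> S"
    have "g (insert I Q) = (-1) ^ card {(u, v) \<in> I \<times> (A - I). v < u} * x I * g Q"
      if "Q \<in> m_partitions m (A - I)" for Q
    proof -
      have "I \<notin> Q" using that \<open>I \<in> S\<close> by (auto simp: S_def m_partitions_def)
      moreover have "finite Q" using that assms(1) by (simp add: finite_m_partition)
      ultimately show ?thesis
        using word_sign_insert_m_partition[where 'k = 'k, OF assms(1) _ _ _ that] \<open>I \<in> S\<close>
        by (simp add: g_def S_def)
    qed
    then show "(\<Sum>Q\<in>m_partitions m (A - I). g (insert I Q)) =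
      (-1) ^ card {(u, v) \<in> I \<times> (A - I). v < u} * x I * hpf m k (A - I) x"
      by (simp add: hpf_def g_def sum_distrib_left)
  qed
  finally show ?thesis by (simp add: S_def)
qed

lemma hpf_empty:
  fixes x :: "'b::linorder set \<Rightarrow> 'k::field"
  assumes "m \<ge> 1"
  shows "hpf m k {} x = 1"
proof -
  have partitions: "m_partitions m {} = {{}}"
    using assms by (auto simp: m_partitions_def)
  have "partition_word ({} :: 'b set set) = []"
    using set_partition_word[of "{}"] by simp
  then show ?thesis by (simp add: hpf_def partitions word_sign_def inversions_def)
qed

lemma hpf_single_block:
  fixes x :: "'b::linorder set \<Rightarrow> 'k::field"
  assumes "finite A" "card A = m" "m \<ge> 1"
  shows "hpf m (Suc k) A x = x A"
proof -
  have "A \<noteq> {}" using assms by auto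
  have "I = A" if "I \<subseteq> A" "card I = m" for I
    using card_subset_eq[OF assms(1) that(1)] that(2) assms(2) by simp
  then have "{I. I \<subseteq> A \<and> Min A \<in> I \<and> card I = m} = {A}"
    using Min_in[OF assms(1) \<open>A \<noteq> {}\<close>] assms(2) by auto
  then show ?thesis
    using hpf_expand_Min[OF assms(1) \<open>A \<noteq> {}\<close>, of m k x] by (simp add: hpf_empty[OF assms(3)])
qed

lemma HPf_1_eq_zero:
  assumes "m \<ge> 1"
  shows "(HPf m 1 B :: ('b::linorder set \<Rightarrow> 'k::field) set) = {\<lambda>I. 0}"
proof (intro equalityI subsetI)
  fix x :: "'b set \<Rightarrow> 'k" assume x: "x \<in> HPf m 1 B"
  have "x I = 0" for I
  proof (rule ccontr)
    assume "x I \<noteq> 0"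
    then have "I \<subseteq> B" "card I = m" using x by (auto simp: HPf_def wedge_space_def)
    moreover from this have "finite I" using assms by (simp add: card_ge_0_finite)
    ultimately have "x I = hpf m 1 I x" using hpf_single_block[of I m 0 x] assms by simp
    also have "\<dots> = 0" using x \<open>I \<subseteq> B\<close> \<open>card I = m\<close> by (simp add: HPf_def)
    finally show False using \<open>x I \<noteq> 0\<close> by simp
  qed
  then show "x \<in> {\<lambda>I. 0}" by auto
next
  have "hpf m 1 A (\<lambda>I. 0 :: 'k) = 0" if "card A = m" for A :: "'b set"
    using hpf_single_block[of A m 0] that assms by (simp add: card_ge_0_finite)
  then show "x \<in> HPf m 1 B" if "x \<in> {\<lambda>I. 0}" for x :: "'b set \<Rightarrow> 'k"
    using that by (auto simp: HPf_def wedge_space_def)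
qed

lemma HPf_subset_HPf_Suc:
  assumes "m \<ge> 1"
  shows "(HPf m l B :: ('b::linorder set \<Rightarrow> 'k::field) set) \<subseteq> HPf m (Suc l) B"
proof
  fix x :: "'b set \<Rightarrow> 'k" assume x: "x \<in> HPf m l B"
  have "hpf m (Suc l) A x = 0" if A: "A \<subseteq> B" "card A = m * Suc l" for A
  proof -
    have "finite A" "A \<noteq> {}" using A assms by (auto simp: card_ge_0_finite)
    have "hpf m l (A - I) x = 0" if "I \<subseteq> A" "card I = m" for I
    proof -
      have "card (A - I) = m * l"
        using A(2) that \<open>finite A\<close> by (simp add: card_Diff_subset finite_subset)
      moreover have "A - I \<subseteq> B" using A(1) by blast
      ultimately show ?thesis using x by (simp add: HPf_def)
    qed
    then show ?thesis by (simp add: hpf_expand_Min[OF \<open>finite A\<close> \<open>A \<noteq> {}\<close>])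
  qed
  then show "x \<in> HPf m (Suc l) B" using x by (simp add: HPf_def)
qed

lemma HPf_eq_wedge_space:
  assumes "finite B" "card B < m * L"
  shows "HPf m L B = wedge_space m B"
proof -
  have "\<not> (A \<subseteq> B \<and> card A = m * L)" for A
    using assms card_mono[OF assms(1), of A] by linarith
  then show ?thesis unfolding HPf_def by blast
qed

theorem proposition3p17:
  fixes B :: "'b::linorder set" and m :: nat
  assumes "finite B" and "even m" and "m \<ge> 2"
  shows "HPf m 1 B = {(\<lambda>I. 0 :: 'k::field)}
    \<and> (\<forall>l\<ge>1. (HPf m l B :: ('b set \<Rightarrow> 'k) set) \<subseteq> HPf m (l + 1) B)
    \<and> (\<forall>l\<ge>1. (HPf m l B :: ('b set \<Rightarrow> 'k) set) \<subseteq> wedge_space m B)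
    \<and> (\<exists>L0. \<forall>L\<ge>L0. (HPf m L B :: ('b set \<Rightarrow> 'k) set) = wedge_space m B)"
proof (intro conjI allI impI)
  have "m \<ge> 1" using assms(3) by simp
  show "HPf m 1 B = {\<lambda>I. 0 :: 'k}" using HPf_1_eq_zero[OF \<open>m \<ge> 1\<close>] .
  show "HPf m l B \<subseteq> HPf m (l + 1) B" for l
    using HPf_subset_HPf_Suc[OF \<open>m \<ge> 1\<close>] by simp
  show "HPf m l B \<subseteq> wedge_space m B" for l
    by (auto simp: HPf_def)
  have "card B < m * L" if "L \<ge> Suc (card B)" for L
  proof -
    have "L \<le> m * L" using \<open>m \<ge> 1\<close> by simp
    then show ?thesis using that by linarith
  qed
  then show "\<exists>L0. \<forall>L\<ge>L0. HPf m L B = (wedge_space m B :: ('b set \<Rightarrow> 'k) set)"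
    using HPf_eq_wedge_space[OF assms(1)] by blast
qed

end
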